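(* Let $\mathbb I\subseteq\mathbb R$ be an interval with non-empty interior, $d\in\mathbb N$, and $\kappa:\mathbb I\to\mathbb R^d$ locally integrable. Consider the linear functional $H:C_c^\infty(\mathbb I,\mathbb R^d)\to\mathbb R$, $H(f)=\int_{\mathbb I}\kappa(t)^Tf(t)\,dt$. Suppose $H$ is continuous with respect to the topology of point-wise convergence on $C_c^\infty(\mathbb I,\mathbb R^d)$. Then $\kappa$ vanishes Lebesgue-almost everywhere and, hence, $H$ is constantly zero.
   Context: $C_c^\infty(\mathbb I,\mathbb R^d)$ is the set of smooth compactly supported functions $\mathbb I\to\mathbb R^d$. The topology of point-wise convergence on it is the subspace topology induced by the product topology on $(\mathbb R^d)^{\mathbb I}$. *)

theory Defs
  imports "HOL-Analysis.Analysis"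
begin

definition smooth_fun :: "(real \<Rightarrow> 'a::real_normed_vector) \<Rightarrow> bool" where
  "smooth_fun f \<longleftrightarrow> (\<exists>D :: nat \<Rightarrow> real \<Rightarrow> 'a. D 0 = f \<and>
      (\<forall>k t. (D k has_vector_derivative D (Suc k) t) (at t)))"

text \<open>They are represented as functions on the whole real line (zero outside I).\<close>
definition test_functions :: "real set \<Rightarrow> (real \<Rightarrow> 'a::euclidean_space) set" where
  "test_functions I = {f. smooth_fun f \<and> compact (closure {t. f t \<noteq> 0})
                            \<and> closure {t. f t \<noteq> 0} \<subseteq> I}"

definition locally_integrable_on :: "(real \<Rightarrow> 'a::euclidean_space) \<Rightarrow> real set \<Rightarrow> bool" where
  "locally_integrable_on \<kappa> I \<longleftrightarrow> (\<forall>K. compact K \<and> K \<subseteq> I \<longrightarrow> set_integrable lebesgue K \<kappa>)"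

end

theory Submission
  imports Defs "HOL-Computational_Algebra.Polynomial"
begin

text \<open>Continuity of \<open>H\<close> at \<open>0\<close> for the product topology yields a basic neighbourhood of \<open>0\<close>
  that constrains the values at only finitely many points \<open>F\<close>; since it contains all
  multiples of any test function vanishing on \<open>F\<close>, homogeneity forces \<open>H\<close> to vanish on
  such functions. Smooth bumps supported in an interval \<open>[x, y]\<close> avoiding \<open>F\<close> and
  converging to its indicator then show, by dominated convergence, that \<open>\<kappa>\<close> integrates to
  \<open>0\<close> over every such interval. Lebesgue differentiation gives \<open>\<kappa> = 0\<close> almost everywhere on
  \<open>interior I - F\<close>, and the frontier of \<open>I\<close> and \<open>F\<close> are null sets.\<close>

fun Ck :: "nat \<Rightarrow> (real \<Rightarrow> real) \<Rightarrow> bool" where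
  "Ck 0 f \<longleftrightarrow> True"
| "Ck (Suc n) f \<longleftrightarrow> (\<exists>f'. (\<forall>t. (f has_real_derivative f' t) (at t)) \<and> Ck n f')"

lemma Ck_SucD: "Ck (Suc n) f \<Longrightarrow> Ck n f"
  by (induction n arbitrary: f) auto

lemma Ck_const: "Ck n (\<lambda>t. c)"
  by (induction n arbitrary: c) (auto intro!: exI[of _ "\<lambda>t. 0"] derivative_eq_intros)

lemma Ck_add: "Ck n f \<Longrightarrow> Ck n g \<Longrightarrow> Ck n (\<lambda>t. f t + g t)"
proof (induction n arbitrary: f g)
  case (Suc n)
  then obtain f' g' where "\<forall>t. (f has_real_derivative f' t) (at t)" "Ck n f'"
    "\<forall>t. (g has_real_derivative g' t) (at t)" "Ck n g'" by auto
  with Suc.IH show ?case by (auto intro!: exI[of _ "\<lambda>t. f' t + g' t"] derivative_eq_intros)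
qed simp

lemma Ck_mult: "Ck n f \<Longrightarrow> Ck n g \<Longrightarrow> Ck n (\<lambda>t. f t * g t)"
proof (induction n arbitrary: f g)
  case (Suc n)
  then obtain f' g' where f': "\<forall>t. (f has_real_derivative f' t) (at t)" "Ck n f'"
    and g': "\<forall>t. (g has_real_derivative g' t) (at t)" "Ck n g'" by auto
  have "Ck n (\<lambda>t. f' t * g t + f t * g' t)"
    using Suc.IH f' g' Ck_SucD[OF Suc.prems(1)] Ck_SucD[OF Suc.prems(2)] by (intro Ck_add) auto
  moreover have "((\<lambda>t. f t * g t) has_real_derivative f' t * g t + f t * g' t) (at t)" for t
    using f' g' by (auto intro!: derivative_eq_intros)
  ultimately show ?case by (auto intro!: exI[of _ "\<lambda>t. f' t * g t + f t * g' t"])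
qed simp

lemma Ck_compose_affine: "Ck n f \<Longrightarrow> Ck n (\<lambda>t. f (a * t + b))"
proof (induction n arbitrary: f)
  case (Suc n)
  then obtain f' where f': "\<forall>t. (f has_real_derivative f' t) (at t)" "Ck n f'" by auto
  have "Ck n (\<lambda>t. a * f' (a * t + b))"
    using Suc.IH f' by (intro Ck_mult Ck_const) auto
  moreover have "((\<lambda>t. f (a * t + b)) has_real_derivative a * f' (a * t + b)) (at t)" for t
  proof -
    have "((\<lambda>t. a * t + b) has_real_derivative a) (at t)"
      by (auto intro!: derivative_eq_intros)
    from DERIV_chain2[OF f'(1)[rule_format] this] show ?thesis
      by (simp add: mult.commute)
  qed
  ultimately show ?case by (auto intro!: exI[of _ "\<lambda>t. a * f' (a * t + b)"])
qed simp

lemma Ck_Suc_imp_continuous_on: "Ck (Suc n) f \<Longrightarrow> continuous_on S f"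
  by (auto intro: DERIV_continuous_on has_field_derivative_at_within)

lemma smooth_fun_scaleR:
  assumes "\<And>n. Ck n f"
  shows "smooth_fun (\<lambda>t. f t *\<^sub>R v)"
proof -
  have deriv_Ck: "Ck n (deriv f) \<and> (\<forall>t. (f has_real_derivative deriv f t) (at t))"
    if "Ck (Suc n) f" for n f
  proof -
    from that obtain f' where "\<forall>t. (f has_real_derivative f' t) (at t)" "Ck n f'" by auto
    moreover from this have "deriv f = f'" by (auto intro!: ext DERIV_imp_deriv)
    ultimately show ?thesis by auto
  qed
  have Ck_derivs: "Ck n ((deriv ^^ k) f)" for n k
    by (induction k arbitrary: n) (auto simp: assms deriv_Ck)
  then have "((deriv ^^ k) f has_real_derivative (deriv ^^ Suc k) f t) (at t)" for k t
    using deriv_Ck[OF Ck_derivs[of "Suc 0" k]] by simp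
  then show ?thesis
    unfolding smooth_fun_def
    by (intro exI[of _ "\<lambda>k t. (deriv ^^ k) f t *\<^sub>R v"])
      (auto intro!: derivative_eq_intros simp: has_real_derivative_iff_has_vector_derivative)
qed

lemma poly_times_exp_minus_tendsto_0: "((\<lambda>x. poly p x * exp (- x)) \<longlongrightarrow> (0::real)) at_top"
proof -
  have "((\<lambda>x. \<Sum>i\<le>degree p. coeff p i * (x ^ i / exp x)) \<longlongrightarrow> (\<Sum>i\<le>degree p. coeff p i * 0)) at_top"
    by (intro tendsto_sum tendsto_mult tendsto_const tendsto_power_div_exp_0)
  moreover have "(\<Sum>i\<le>degree p. coeff p i * (x ^ i / exp x)) = poly p x * exp (- x)" for x
    by (simp add: poly_altdef exp_minus divide_inverse mult.assoc sum_distrib_right)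
  ultimately show ?thesis by simp
qed

text \<open>The polynomial parameter makes this family closed under differentiation; the
  standard flat function \<open>exp (- 1 / t)\<close> is \<open>exp_flat 1\<close>.\<close>

definition exp_flat :: "real poly \<Rightarrow> real \<Rightarrow> real" where
  "exp_flat p t = (if t > 0 then poly p (1 / t) * exp (- (1 / t)) else 0)"

lemma exp_flat_one: "exp_flat 1 t = (if t > 0 then exp (- (1 / t)) else 0)"
  by (simp add: exp_flat_def)

lemma exp_flat_has_real_derivative:
  "(exp_flat p has_real_derivative exp_flat ([:0, 0, 1:] * (p - pderiv p)) t) (at t)"
proof -
  consider "t > 0" | "t < 0" | "t = 0" by linarith
  then show ?thesis
  proof cases
    case 1
    have "((\<lambda>t. poly p (1 / t) * exp (- (1 / t))) has_real_derivative
        exp_flat ([:0, 0, 1:] * (p - pderiv p)) t) (at t)"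
      using 1 by (auto intro!: derivative_eq_intros
          simp: exp_flat_def algebra_simps power2_eq_square divide_simps)
    then show ?thesis
      by (rule has_field_derivative_transform_within_open[of _ _ _ "{0<..}"])
        (use 1 in \<open>auto simp: exp_flat_def\<close>)
  next
    case 2
    have "((\<lambda>t. 0) has_real_derivative exp_flat ([:0, 0, 1:] * (p - pderiv p)) t) (at t)"
      using 2 by (auto intro!: derivative_eq_intros simp: exp_flat_def)
    then show ?thesis
      by (rule has_field_derivative_transform_within_open[of _ _ _ "{..<0}"])
        (use 2 in \<open>auto simp: exp_flat_def\<close>)
  next
    case 3
    \<comment> \<open>The right difference quotient is \<open>poly (pCons 0 p) s * exp (- s)\<close> at \<open>s = 1 / y\<close>.\<close>
    have "((\<lambda>y. (exp_flat p y - exp_flat p 0) / (y - 0)) \<longlongrightarrow> 0) (at_right 0)"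
      using filterlim_compose[OF poly_times_exp_minus_tendsto_0[of "pCons 0 p"]
          filterlim_inverse_at_top_right]
      by (rule Lim_transform_eventually)
        (auto simp: exp_flat_def field_simps intro!: eventually_mono[OF eventually_at_right_less[of 0]])
    moreover have "((\<lambda>y. (exp_flat p y - exp_flat p 0) / (y - 0)) \<longlongrightarrow> 0) (at_left 0)"
      by (rule tendsto_eventually)
        (auto simp: exp_flat_def eventually_at_filter intro!: always_eventually)
    ultimately show ?thesis
      using 3 by (simp add: has_field_derivative_iff exp_flat_def filterlim_split_at)
  qed
qed

lemma Ck_exp_flat: "Ck n (exp_flat p)"
  by (induction n arbitrary: p) (auto intro: exp_flat_has_real_derivative)

definition bump :: "real \<Rightarrow> real \<Rightarrow> nat \<Rightarrow> real \<Rightarrow> real" where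
  "bump x y k t = exp_flat 1 (real (Suc k) * (t - x)) * exp_flat 1 (real (Suc k) * (y - t))"

lemma Ck_bump: "Ck n (bump x y k)"
proof -
  have "Ck n (\<lambda>t. exp_flat 1 (real (Suc k) * t + - real (Suc k) * x) *
      exp_flat 1 (- real (Suc k) * t + real (Suc k) * y))"
    by (intro Ck_mult Ck_compose_affine Ck_exp_flat)
  then show ?thesis
    unfolding bump_def by (simp add: algebra_simps)
qed

lemma bump_eq_0: "t \<notin> {x<..<y} \<Longrightarrow> bump x y k t = 0"
  by (auto simp: bump_def exp_flat_one zero_less_mult_iff)

lemma bump_nonneg: "0 \<le> bump x y k t"
  and bump_le_1: "bump x y k t \<le> 1"
  by (auto simp: bump_def exp_flat_one mult_le_one)

lemma bump_tendsto_indicator: "(\<lambda>k. bump x y k t) \<longlonglongrightarrow> indicator {x<..<y} t"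
proof (cases "t \<in> {x<..<y}")
  case True
  have "(\<lambda>k. exp (- (inverse (real (Suc k)) / (t - x))) * exp (- (inverse (real (Suc k)) / (y - t))))
      \<longlonglongrightarrow> exp (- (0 / (t - x))) * exp (- (0 / (y - t)))"
    using True by (intro tendsto_intros LIMSEQ_inverse_real_of_nat) auto
  then show ?thesis
    using True by (simp add: bump_def exp_flat_one divide_inverse mult.commute)
qed (simp add: bump_eq_0)

lemma continuous_homogeneous_vanishes_off_finite:
  fixes S :: "('i \<Rightarrow> 'b::real_normed_vector) set" and H :: "('i \<Rightarrow> 'b) \<Rightarrow> real"
  assumes zero: "(\<lambda>i. 0) \<in> S"
    and scaleR: "\<And>c f. f \<in> S \<Longrightarrow> (\<lambda>i. c *\<^sub>R f i) \<in> S"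
    and homogeneous: "\<And>c f. f \<in> S \<Longrightarrow> H (\<lambda>i. c *\<^sub>R f i) = c * H f"
    and cont: "continuous_on S H"
  obtains F where "finite F" "\<And>f. f \<in> S \<Longrightarrow> (\<forall>i\<in>F. f i = 0) \<Longrightarrow> H f = 0"
proof -
  have "H (\<lambda>i. 0) \<in> {-1<..<1}"
    using homogeneous[OF zero, of 0] by simp
  then obtain U where "open U" "(\<lambda>i. 0) \<in> U" and U: "\<And>f. f \<in> S \<Longrightarrow> f \<in> U \<Longrightarrow> H f \<in> {-1<..<1}"
    using cont zero unfolding continuous_on_topological by (metis open_greaterThanLessThan)
  then obtain X where X: "(\<lambda>i. 0) \<in> (\<Pi>\<^sub>E i\<in>UNIV. X i)" "finite {i. X i \<noteq> UNIV}"
    "(\<Pi>\<^sub>E i\<in>UNIV. X i) \<subseteq> U"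
    using product_topology_open_contains_basis[of "\<lambda>i. euclidean" UNIV U "\<lambda>i. 0"]
    by (auto simp: open_fun_def)
  show ?thesis
  proof (rule that[OF X(2)])
    fix f assume f: "f \<in> S" and vanish: "\<forall>i\<in>{i. X i \<noteq> UNIV}. f i = 0"
    have "\<bar>c * H f\<bar> < 1" for c
    proof -
      have "(\<lambda>i. c *\<^sub>R f i) \<in> (\<Pi>\<^sub>E i\<in>UNIV. X i)"
        using X(1) vanish by (fastforce simp: PiE_iff)
      then have "H (\<lambda>i. c *\<^sub>R f i) \<in> {-1<..<1}"
        using U[OF scaleR[OF f]] X(3) by blast
      then show ?thesis
        using homogeneous[OF f] by (simp add: abs_less_iff)
    qed
    from this[of "1 / H f"] show "H f = 0"
      by (cases "H f = 0") auto
  qed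
qed

lemma zero_in_test_functions: "(\<lambda>t. 0) \<in> test_functions I"
  unfolding test_functions_def smooth_fun_def by (auto intro!: exI[of _ "\<lambda>k t. 0"])

lemma scaleR_in_test_functions:
  assumes "f \<in> test_functions I"
  shows "(\<lambda>t. c *\<^sub>R f t) \<in> test_functions I"
proof -
  from assms obtain D where D: "D 0 = f" "\<And>k t. (D k has_vector_derivative D (Suc k) t) (at t)"
    unfolding test_functions_def smooth_fun_def by blast
  have "smooth_fun (\<lambda>t. c *\<^sub>R f t)"
    unfolding smooth_fun_def using D
    by (intro exI[of _ "\<lambda>k t. c *\<^sub>R D k t"]) (auto intro!: derivative_eq_intros)
  moreover have "closure {t. c *\<^sub>R f t \<noteq> 0} \<subseteq> closure {t. f t \<noteq> 0}"
    by (intro closure_mono) auto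
  ultimately show ?thesis
    using assms unfolding test_functions_def by (auto intro: bounded_subset)
qed

lemma bump_scaleR_in_test_functions:
  assumes "{x..y} \<subseteq> I"
  shows "(\<lambda>t. bump x y k t *\<^sub>R v) \<in> test_functions I"
proof -
  have "{t. bump x y k t *\<^sub>R v \<noteq> 0} \<subseteq> {x<..<y}"
    using bump_eq_0 by force
  then have "closure {t. bump x y k t *\<^sub>R v \<noteq> 0} \<subseteq> {x..y}"
    by (intro closure_minimal) auto
  moreover from this have "bounded {t. bump x y k t *\<^sub>R v \<noteq> 0}"
    by (meson bounded_closed_interval bounded_subset closure_subset order_trans)
  ultimately show ?thesis
    using assms smooth_fun_scaleR[OF Ck_bump] unfolding test_functions_def by auto
qed

lemma bump_times_absolutely_integrable:
  fixes g :: "real \<Rightarrow> real"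
  assumes "g absolutely_integrable_on {x..y}"
  shows "(\<lambda>t. bump x y k t * g t) absolutely_integrable_on {x..y}"
proof (rule absolutely_integrable_bounded_measurable_product_real[OF _ _ _ assms])
  show "{x..y} \<in> sets lebesgue"
    by simp
  then show "bump x y k \<in> borel_measurable (lebesgue_on {x..y})"
    by (rule continuous_imp_measurable_on_sets_lebesgue[OF Ck_Suc_imp_continuous_on[OF Ck_bump[of "Suc 0"]]])
  show "bounded (bump x y k ` {x..y})"
    using bump_nonneg bump_le_1 by (intro boundedI[of _ 1]) auto
qed

lemma bump_integrals_tendsto:
  fixes g :: "real \<Rightarrow> real"
  assumes g: "g absolutely_integrable_on {x..y}"
  shows "(\<lambda>k. integral {x..y} (\<lambda>t. bump x y k t * g t)) \<longlonglongrightarrow> integral {x..y} g"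
proof -
  have "(\<lambda>k. integral {x..y} (\<lambda>t. bump x y k t * g t))
      \<longlonglongrightarrow> integral {x..y} (\<lambda>t. indicator {x<..<y} t * g t)"
  proof (rule dominated_convergence(2)[where h="\<lambda>t. norm (g t)"])
    show "(\<lambda>t. bump x y k t * g t) integrable_on {x..y}" for k
      using bump_times_absolutely_integrable[OF g] by (rule set_lebesgue_integral_eq_integral(1))
    show "(\<lambda>t. norm (g t)) integrable_on {x..y}"
      using g by (simp add: absolutely_integrable_on_def)
    show "norm (bump x y k t * g t) \<le> norm (g t)" for k t
      using bump_nonneg[of x y k t] bump_le_1[of x y k t]
      by (auto simp: abs_mult intro: mult_left_le_one_le)
    show "(\<lambda>k. bump x y k t * g t) \<longlonglongrightarrow> indicator {x<..<y} t * g t" for t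
      by (intro tendsto_mult_right bump_tendsto_indicator)
  qed
  moreover have "integral {x..y} (\<lambda>t. indicator {x<..<y} t * g t) = integral {x..y} g"
    by (rule integral_spike[of "{x, y}"]) auto
  ultimately show ?thesis
    by simp
qed

lemma AE_zero_if_subinterval_integrals_zero:
  fixes g :: "real \<Rightarrow> 'b::euclidean_space"
  assumes "g integrable_on {c..d}"
    and zero: "\<And>x y. c \<le> x \<Longrightarrow> x < y \<Longrightarrow> y \<le> d \<Longrightarrow> integral {x..y} g = 0"
  shows "AE t in lebesgue. t \<in> {c<..<d} \<longrightarrow> g t = 0"
proof -
  define g0 where "g0 t = (if t \<in> {c..d} then g t else 0)" for t
  have "g0 integrable_on UNIV"
    using assms(1) unfolding g0_def by (subst Henstock_Kurzweil_Integration.integrable_restrict_UNIV)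
  then have "g0 integrable_on cbox a b" for a b
    by (rule integrable_on_subcbox) auto
  \<comment> \<open>Lebesgue differentiation: off a null set, \<open>g0\<close> is the limit of its averages over \<open>[t, t + h]\<close>.\<close>
  then obtain N where N: "negligible N"
    "\<And>t e. t \<notin> N \<Longrightarrow> 0 < e \<Longrightarrow> \<exists>\<delta>>0. \<forall>h. 0 < h \<and> h < \<delta> \<longrightarrow>
        norm (integral (cbox t (t + h *\<^sub>R One)) g0 /\<^sub>R h ^ DIM(real) - g0 t) < e"
    using integrable_ccontinuous_explicit[of g0] by blast
  have "g t = 0" if t: "t \<in> {c<..<d}" "t \<notin> N" for t
  proof (rule ccontr)
    assume "g t \<noteq> 0"
    then obtain \<delta> where "\<delta> > 0" and \<delta>: "\<And>h. 0 < h \<Longrightarrow> h < \<delta> \<Longrightarrow>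
        norm (integral (cbox t (t + h *\<^sub>R One)) g0 /\<^sub>R h ^ DIM(real) - g0 t) < norm (g t)"
      using N(2)[OF t(2), of "norm (g t)"] by auto
    define h where "h = min (\<delta> / 2) ((d - t) / 2)"
    have h: "0 < h" "h < \<delta>" "t + h < d"
      using t \<open>\<delta> > 0\<close> by (auto simp: h_def min_def field_simps)
    have "integral (cbox t (t + h *\<^sub>R One)) g0 = integral {t..t + h} g"
      using t h by (auto simp: g0_def intro!: integral_cong)
    also have "\<dots> = 0"
      using t h by (intro zero) auto
    finally show False
      using \<delta>[OF h(1,2)] t by (simp add: g0_def)
  qed
  moreover have "AE t in lebesgue. t \<notin> N"
    using N(1) by (intro AE_not_in) (simp add: negligible_iff_null_sets)
  ultimately show ?thesis
    by (auto elim: eventually_mono)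
qed

lemma AE_in_open_if_AE_in_subintervals:
  fixes V :: "real set"
  assumes "open V"
    and AE_interval: "\<And>c d. c < d \<Longrightarrow> {c..d} \<subseteq> V \<Longrightarrow> AE t in lebesgue. t \<in> {c<..<d} \<longrightarrow> P t"
  shows "AE t in lebesgue. t \<in> V \<longrightarrow> P t"
proof -
  have "AE t in lebesgue. \<forall>c\<in>\<rat>. \<forall>d\<in>\<rat>. c < d \<and> {c..d} \<subseteq> V \<longrightarrow> t \<in> {c<..<d} \<longrightarrow> P t"
    unfolding AE_ball_countable[OF countable_rat]
  proof (intro ballI)
    fix c d :: real
    show "AE t in lebesgue. c < d \<and> {c..d} \<subseteq> V \<longrightarrow> t \<in> {c<..<d} \<longrightarrow> P t"
      using AE_interval[of c d] by (cases "c < d \<and> {c..d} \<subseteq> V") auto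
  qed
  then show ?thesis
  proof (rule eventually_mono, intro impI)
    fix t
    assume P_rat: "\<forall>c\<in>\<rat>. \<forall>d\<in>\<rat>. c < d \<and> {c..d} \<subseteq> V \<longrightarrow> t \<in> {c<..<d} \<longrightarrow> P t"
      and "t \<in> V"
    then obtain e where "e > 0" "ball t e \<subseteq> V"
      using \<open>open V\<close> open_contains_ball by blast
    moreover obtain c d where "c \<in> \<rat>" "t - e < c" "c < t" "d \<in> \<rat>" "t < d" "d < t + e"
      using Rats_dense_in_real[of "t - e" t] Rats_dense_in_real[of t "t + e"] \<open>e > 0\<close> by auto
    moreover from this have "{c..d} \<subseteq> ball t e"
      by (auto simp: dist_real_def)
    ultimately show "P t"
      using P_rat by auto
  qed
qed

lemma interval_integral_zero_if_vanishes_off: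
  fixes \<kappa> :: "real \<Rightarrow> 'a::euclidean_space" and H :: "(real \<Rightarrow> 'a) \<Rightarrow> real"
  assumes H: "\<And>f. f \<in> test_functions I \<Longrightarrow> H f = (LINT t:I|lebesgue. \<kappa> t \<bullet> f t)"
    and loc: "locally_integrable_on \<kappa> I"
    and vanish: "\<And>f. f \<in> test_functions I \<Longrightarrow> (\<forall>t\<in>F. f t = 0) \<Longrightarrow> H f = 0"
    and sub: "{x..y} \<subseteq> I" and disj: "{x..y} \<inter> F = {}"
  shows "integral {x..y} \<kappa> = 0"
proof -
  have \<kappa>: "\<kappa> absolutely_integrable_on {x..y}"
    using loc sub unfolding locally_integrable_on_def by auto
  have "integral {x..y} (\<lambda>t. \<kappa> t \<bullet> i) = 0" for i
  proof -
    let ?g = "\<lambda>t. \<kappa> t \<bullet> i"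
    have g: "?g absolutely_integrable_on {x..y}"
      using \<kappa> by (rule absolutely_integrable_component)
    have "integral {x..y} (\<lambda>t. bump x y k t * ?g t) = 0" for k
    proof -
      have test: "(\<lambda>t. bump x y k t *\<^sub>R i) \<in> test_functions I"
        using sub by (rule bump_scaleR_in_test_functions)
      have "H (\<lambda>t. bump x y k t *\<^sub>R i) = (LINT t:I|lebesgue. \<kappa> t \<bullet> (bump x y k t *\<^sub>R i))"
        using H[OF test] .
      also have "\<dots> = (LINT t:{x..y}|lebesgue. bump x y k t * ?g t)"
        unfolding set_lebesgue_integral_def
      proof (intro Bochner_Integration.integral_cong refl)
        fix t
        show "indicator I t *\<^sub>R (\<kappa> t \<bullet> (bump x y k t *\<^sub>R i)) = indicator {x..y} t *\<^sub>R (bump x y k t * ?g t)"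
          using sub bump_eq_0[of t x y k] by (cases "t \<in> {x..y}") (auto simp: indicator_def)
      qed
      also have "\<dots> = integral {x..y} (\<lambda>t. bump x y k t * ?g t)"
        using bump_times_absolutely_integrable[OF g] by (rule set_lebesgue_integral_eq_integral(2))
      finally have "H (\<lambda>t. bump x y k t *\<^sub>R i) = integral {x..y} (\<lambda>t. bump x y k t * ?g t)" .
      moreover have "bump x y k t *\<^sub>R i = 0" if "t \<in> F" for t
      proof -
        have "t \<notin> {x<..<y}"
          using that disj by (auto simp: disjoint_iff less_imp_le)
        then show ?thesis
          by (simp add: bump_eq_0)
      qed
      ultimately show ?thesis
        using vanish[OF test] by auto
    qed
    with bump_integrals_tendsto[OF g] show ?thesis
      by (simp add: LIMSEQ_const_iff)
  qed
  then show ?thesis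
    using set_lebesgue_integral_eq_integral(1)[OF \<kappa>] by (metis integral_component_eq inner_eq_zero_iff)
qed

lemma AE_zero_if_interval_integrals_zero:
  fixes \<kappa> :: "real \<Rightarrow> 'a::euclidean_space"
  assumes "is_interval I" "locally_integrable_on \<kappa> I" "finite F"
    and zero: "\<And>x y. {x..y} \<subseteq> I \<Longrightarrow> {x..y} \<inter> F = {} \<Longrightarrow> integral {x..y} \<kappa> = 0"
  shows "AE t in lebesgue. t \<in> I \<longrightarrow> \<kappa> t = 0"
proof -
  have "AE t in lebesgue. t \<in> interior I - F \<longrightarrow> \<kappa> t = 0"
  proof (rule AE_in_open_if_AE_in_subintervals)
    show "open (interior I - F)"
      using \<open>finite F\<close> by (intro open_Diff finite_imp_closed) auto
    fix c d assume "{c..d} \<subseteq> interior I - F"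
    then have cd: "{c..d} \<subseteq> I" "{c..d} \<inter> F = {}"
      using interior_subset by blast+
    show "AE t in lebesgue. t \<in> {c<..<d} \<longrightarrow> \<kappa> t = 0"
    proof (rule AE_zero_if_subinterval_integrals_zero)
      show "\<kappa> integrable_on {c..d}"
        using assms(2) cd(1) unfolding locally_integrable_on_def
        by (auto intro: set_lebesgue_integral_eq_integral(1))
      fix x y assume "c \<le> x" "x < y" "y \<le> d"
      then have "{x..y} \<subseteq> {c..d}"
        by auto
      with cd show "integral {x..y} \<kappa> = 0"
        by (intro zero) blast+
    qed
  qed
  moreover have "AE t in lebesgue. t \<notin> frontier I \<union> F"
  proof (rule AE_not_in)
    have "negligible (frontier I)"
      using \<open>is_interval I\<close> by (simp add: negligible_convex_frontier is_interval_convex)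
    then show "frontier I \<union> F \<in> null_sets lebesgue"
      using negligible_finite[OF \<open>finite F\<close>] by (simp add: negligible_iff_null_sets[symmetric])
  qed
  ultimately show ?thesis
    by eventually_elim (auto simp: frontier_def dest: subsetD[OF closure_subset])
qed

theorem propositionB1:
  fixes I :: "real set" and \<kappa> :: "real \<Rightarrow> 'a::euclidean_space"
    and H :: "(real \<Rightarrow> 'a) \<Rightarrow> real"
  assumes "is_interval I" and "interior I \<noteq> {}"
    and "locally_integrable_on \<kappa> I"
    and "\<And>f. f \<in> test_functions I \<Longrightarrow> H f = (LINT t:I|lebesgue. \<kappa> t \<bullet> f t)"
    and "continuous_on (test_functions I) H"
  shows "(AE t in lebesgue. t \<in> I \<longrightarrow> \<kappa> t = 0) \<and> (\<forall>f \<in> test_functions I. H f = 0)"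
proof -
  note H = assms(4)
  have homogeneous: "H (\<lambda>t. c *\<^sub>R f t) = c * H f" if "f \<in> test_functions I" for c f
    using H[OF that] H[OF scaleR_in_test_functions[OF that]] by simp
  obtain F where "finite F" and vanish: "\<And>f. f \<in> test_functions I \<Longrightarrow> (\<forall>t\<in>F. f t = 0) \<Longrightarrow> H f = 0"
    using continuous_homogeneous_vanishes_off_finite[OF zero_in_test_functions
        scaleR_in_test_functions homogeneous assms(5)] by blast
  have AE_zero: "AE t in lebesgue. t \<in> I \<longrightarrow> \<kappa> t = 0"
    using assms(1,3) \<open>finite F\<close>
    by (rule AE_zero_if_interval_integrals_zero)
      (rule interval_integral_zero_if_vanishes_off[OF H assms(3) vanish])
  have "H f = 0" if "f \<in> test_functions I" for f
    unfolding H[OF that] set_lebesgue_integral_def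
    by (rule integral_eq_zero_AE) (use AE_zero in \<open>eventually_elim, auto simp: indicator_def\<close>)
  with AE_zero show ?thesis
    by blast
qed

end
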